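(* Let $\mathcal{U}$ be a selective nonprincipal ultrafilter on $\mathbb{N}$, let $X$ be an infinite-dimensional reflexive Banach space, and let $(T_n)_{n\ge1}$ be a bounded sequence in $B(X)$. Then the ultraproduct $(T_1,T_2,\ldots)_{\mathcal{U}}$ is not equal to $I\oplus0$ with respect to the decomposition $X^{\mathcal{U}}=X\oplus\widehat{X}$ (i.e. it is not the operator that is the identity on $X$ and zero on $\widehat{X}$).
   Context: $X^{\mathcal{U}}$ is the ultrapower of $X$, $(x_n)_{n,\mathcal{U}}$ the class of a bounded sequence; $X$ is identified with constant classes and $\widehat{X}=\{(x_n)_{n,\mathcal{U}}:w\text{-}\lim_{n,\mathcal{U}}x_n=0\}$, so $X^{\mathcal{U}}=X\oplus\widehat{X}$. The ultraproduct is $(T_1,T_2,\ldots)_{\mathcal{U}}(x_n)_{n,\mathcal{U}}=(T_nx_n)_{n,\mathcal{U}}$. An ultrafilter $\mathcal{U}$ on $\mathbb{N}$ is selective if (1) for every sequence $A_1,A_2,\dots$ in $\mathcal{U}$ there is $A\in\mathcal{U}$ with $A\setminus A_k$ finite for each $k$; and (2) for every partition of $\mathbb{N}$ into finite sets $A_1,A_2,\dots$ there is $A\in\mathcal{U}$ with $A\cap A_k$ a singleton for each $k$. *)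

theory Defs
  imports "HOL-Analysis.Analysis"
begin

definition is_ultrafilter :: "nat set set \<Rightarrow> bool" where
  "is_ultrafilter U \<longleftrightarrow>
     UNIV \<in> U \<and> {} \<notin> U \<and>
     (\<forall>A B. A \<in> U \<and> A \<subseteq> B \<longrightarrow> B \<in> U) \<and>
     (\<forall>A B. A \<in> U \<and> B \<in> U \<longrightarrow> A \<inter> B \<in> U) \<and>
     (\<forall>A. A \<in> U \<or> - A \<in> U)"

definition nonprincipal :: "nat set set \<Rightarrow> bool" where
  "nonprincipal U \<longleftrightarrow> (\<forall>n. {n} \<notin> U)"

definition selective :: "nat set set \<Rightarrow> bool" where
  "selective U \<longleftrightarrow>
     (\<forall>A :: nat \<Rightarrow> nat set. (\<forall>k. A k \<in> U) \<longrightarrow>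
        (\<exists>B\<in>U. \<forall>k. finite (B - A k))) \<and>
     (\<forall>A :: nat \<Rightarrow> nat set.
        (\<forall>k. finite (A k) \<and> A k \<noteq> {}) \<and>
        (\<forall>j k. j \<noteq> k \<longrightarrow> A j \<inter> A k = {}) \<and>
        (\<Union>k. A k) = UNIV \<longrightarrow>
        (\<exists>B\<in>U. \<forall>k. \<exists>m. B \<inter> A k = {m}))"

definition infinite_dimensional :: "'a::real_vector itself \<Rightarrow> bool" where
  "infinite_dimensional (TYPE('a)) \<longleftrightarrow> \<not> (\<exists>S::'a set. finite S \<and> span S = UNIV)"

definition reflexive_space :: "'a::banach itself \<Rightarrow> bool" where
  "reflexive_space (TYPE('a)) \<longleftrightarrow>
     (\<forall>\<phi> :: ('a \<Rightarrow>\<^sub>L real) \<Rightarrow>\<^sub>L real. \<exists>x::'a. \<forall>f. blinfun_apply \<phi> f = blinfun_apply f x)"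

definition bounded_seq :: "(nat \<Rightarrow> 'a::real_normed_vector) \<Rightarrow> bool" where
  "bounded_seq x \<longleftrightarrow> (\<exists>M. \<forall>n. norm (x n) \<le> M)"

text \<open>Equality of classes in the ultrapower: (x_n)_U = (y_n)_U iff lim_U ||x_n - y_n|| = 0.\<close>
definition ueq :: "nat set set \<Rightarrow> (nat \<Rightarrow> 'a::real_normed_vector) \<Rightarrow> (nat \<Rightarrow> 'a) \<Rightarrow> bool" where
  "ueq U x y \<longleftrightarrow> (\<forall>e>0. {n. norm (x n - y n) < e} \<in> U)"

definition weak_ulim :: "nat set set \<Rightarrow> (nat \<Rightarrow> 'a::real_normed_vector) \<Rightarrow> 'a \<Rightarrow> bool" where
  "weak_ulim U x l \<longleftrightarrow>
     (\<forall>f :: 'a \<Rightarrow>\<^sub>L real. \<forall>e>0. {n. \<bar>blinfun_apply f (x n) - blinfun_apply f l\<bar> < e} \<in> U)"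

text \<open>The ultraproduct (T_1,T_2,...)_U equals I \<oplus> 0 w.r.t. X^U = X \<oplus> X-hat:
  identity on the constant classes X and zero on X-hat.\<close>
definition ultraproduct_is_I_plus_0 ::
  "nat set set \<Rightarrow> (nat \<Rightarrow> ('a::banach \<Rightarrow>\<^sub>L 'a)) \<Rightarrow> bool" where
  "ultraproduct_is_I_plus_0 U T \<longleftrightarrow>
     (\<forall>x::'a. ueq U (\<lambda>n. blinfun_apply (T n) x) (\<lambda>n. x)) \<and>
     (\<forall>y. bounded_seq y \<and> weak_ulim U y 0 \<longrightarrow> ueq U (\<lambda>n. blinfun_apply (T n) (y n)) (\<lambda>n. 0))"

end

theory Submission
  imports Defs
begin

text \<open>
  By Riesz's lemma an infinite-dimensional Banach space contains a \<open>1/2\<close>-separated sequence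
  \<open>e\<close> in its unit ball. If the ultraproduct were \<open>I \<oplus> 0\<close>, then \<open>T n (e j) \<rightarrow> e j\<close> along \<open>\<U>\<close>
  for every \<open>j\<close>, and the P-point property of \<open>\<U>\<close> yields a diagonal index \<open>k n\<close> such that
  \<open>T n (e (k n))\<close> is close to \<open>e (k n)\<close> for \<open>\<U>\<close>-almost all \<open>n\<close>, while no fibre of \<open>k\<close> lies in \<open>\<U>\<close>.
  By reflexivity the bounded sequence \<open>e (k n)\<close> has a weak \<open>\<U>\<close>-limit \<open>w\<close>, and \<open>I \<oplus> 0\<close> forces
  \<open>T n (e (k n)) \<rightarrow> w\<close> in norm. So \<open>e (k n)\<close> lies within \<open>1/4\<close> of \<open>w\<close> for \<open>\<U>\<close>-almost all \<open>n\<close>,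
  and two such \<open>n\<close> with different values of \<open>k\<close> contradict the separation.
\<close>

lemma abs_mult_infdist_span_le:
  fixes x :: "'a::real_normed_vector"
  assumes "s \<in> span S"
  shows "\<bar>t\<bar> * infdist x (span S) \<le> norm (t *\<^sub>R x + s)"
proof (cases "t = 0")
  case False
  have "(- (1/t)) *\<^sub>R s \<in> span S" using assms by (simp add: span_mul span_neg)
  then have "infdist x (span S) \<le> norm (x + (1/t) *\<^sub>R s)"
    using infdist_le[of "(- (1/t)) *\<^sub>R s"] by (simp add: dist_norm)
  then have "\<bar>t\<bar> * infdist x (span S) \<le> norm (t *\<^sub>R (x + (1/t) *\<^sub>R s))"
    by (simp add: mult_left_mono)
  also have "t *\<^sub>R (x + (1/t) *\<^sub>R s) = t *\<^sub>R x + s"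
    using False by (simp add: scaleR_add_right)
  finally show ?thesis .
qed simp

lemma closed_span_finite:
  fixes S :: "'a::banach set"
  assumes "finite S"
  shows "closed (span S)"
  using assms
proof (induction S rule: finite_induct)
  case (insert x S)
  show ?case
  proof (cases "x \<in> span S")
    case True
    then show ?thesis using insert by (simp add: span_redundant)
  next
    case False
    define d where "d = infdist x (span S)"
    have "d > 0"
      unfolding d_def using infdist_pos_not_in_closed[OF insert.IH _ False] span_zero by blast
    show ?thesis unfolding closed_sequential_limits
    proof (intro allI impI)
      fix z l
      assume z: "(\<forall>n. z n \<in> span (insert x S)) \<and> z \<longlonglongrightarrow> l"
      then have "\<forall>n. \<exists>t. z n - t *\<^sub>R x \<in> span S"
        by (simp add: span_breakdown_eq)
      then obtain t where t: "\<And>n. z n - t n *\<^sub>R x \<in> span S"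
        by metis
      have "Cauchy t"
      proof (rule metric_CauchyI)
        fix e :: real assume "e > 0"
        then obtain N where N: "\<And>m n. m \<ge> N \<Longrightarrow> n \<ge> N \<Longrightarrow> dist (z m) (z n) < e * d"
          using LIMSEQ_imp_Cauchy[of z l] z \<open>d > 0\<close> unfolding Cauchy_def by (meson mult_pos_pos)
        have "dist (t m) (t n) < e" if "m \<ge> N" "n \<ge> N" for m n
        proof -
          have "\<bar>t m - t n\<bar> * d \<le> norm ((t m - t n) *\<^sub>R x + ((z m - t m *\<^sub>R x) - (z n - t n *\<^sub>R x)))"
            unfolding d_def by (intro abs_mult_infdist_span_le span_diff t)
          also have "\<dots> = dist (z m) (z n)" by (simp add: dist_norm algebra_simps)
          also have "\<dots> < e * d" using N[OF that] .
          finally show ?thesis using \<open>d > 0\<close> by (simp add: dist_real_def)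
        qed
        then show "\<exists>M. \<forall>m\<ge>M. \<forall>n\<ge>M. dist (t m) (t n) < e" by blast
      qed
      then obtain \<tau> where "t \<longlonglongrightarrow> \<tau>" using Cauchy_convergent_iff convergent_def by blast
      then have "(\<lambda>n. z n - t n *\<^sub>R x) \<longlonglongrightarrow> l - \<tau> *\<^sub>R x"
        using z by (intro tendsto_intros) auto
      with insert.IH t have "l - \<tau> *\<^sub>R x \<in> span S"
        by (rule closed_sequentially)
      then show "l \<in> span (insert x S)" by (metis span_breakdown_eq)
    qed
  qed
qed simp

lemma riesz_lemma_finite_span:
  fixes S :: "'a::banach set"
  assumes "finite S" "span S \<noteq> UNIV"
  shows "\<exists>e. norm e \<le> 1 \<and> (\<forall>s\<in>span S. 1/2 \<le> norm (e - s))"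
proof -
  obtain v where v: "v \<notin> span S" using assms(2) by blast
  have ne: "span S \<noteq> {}" using span_zero by blast
  define d where "d = infdist v (span S)"
  have "d > 0"
    unfolding d_def using closed_span_finite[OF assms(1)] ne v by (rule infdist_pos_not_in_closed)
  then have "(INF a\<in>span S. dist v a) < 2 * d"
    using ne by (simp add: d_def infdist_notempty)
  then obtain s0 where s0: "s0 \<in> span S" "dist v s0 < 2 * d"
    using ne by (subst (asm) cINF_less_iff) (auto intro: bdd_belowI2[where m=0])
  define c where "c = norm (v - s0)"
  have "c > 0" using s0 v unfolding c_def by auto
  define e where "e = (1/c) *\<^sub>R (v - s0)"
  have "1/2 \<le> norm (e - s)" if "s \<in> span S" for s
  proof -
    have "s0 + c *\<^sub>R s \<in> span S" using that s0 by (simp add: span_add span_mul)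
    then have "d \<le> dist v (s0 + c *\<^sub>R s)" unfolding d_def by (rule infdist_le)
    also have "\<dots> = norm (c *\<^sub>R (e - s))"
      using \<open>c > 0\<close> by (simp add: e_def dist_norm algebra_simps)
    also have "\<dots> = c * norm (e - s)"
      using \<open>c > 0\<close> by simp
    also have "\<dots> \<le> 2 * d * norm (e - s)"
      using s0 by (intro mult_right_mono) (auto simp: c_def dist_norm)
    finally show ?thesis using \<open>d > 0\<close> by simp
  qed
  moreover have "norm e \<le> 1" using \<open>c > 0\<close> by (simp add: e_def c_def)
  ultimately show ?thesis by blast
qed

definition riesz_point :: "'a::banach set \<Rightarrow> 'a" where
  "riesz_point S = (SOME e. norm e \<le> 1 \<and> (\<forall>s\<in>span S. 1/2 \<le> norm (e - s)))"

primrec riesz_points :: "nat \<Rightarrow> 'a::banach set" where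
  "riesz_points 0 = {}"
| "riesz_points (Suc k) = insert (riesz_point (riesz_points k)) (riesz_points k)"

lemma finite_riesz_points: "finite (riesz_points k)"
  by (induction k) auto

lemma riesz_points_mono: "j \<le> k \<Longrightarrow> riesz_points j \<subseteq> riesz_points k"
  by (induction k) (auto simp: le_Suc_eq)

lemma infinite_dimensional_separated_sequence:
  assumes "infinite_dimensional TYPE('a::banach)"
  obtains e :: "nat \<Rightarrow> 'a::banach"
  where "\<And>k. norm (e k) \<le> 1" and "\<And>j k. j \<noteq> k \<Longrightarrow> 1/2 \<le> norm (e j - e k)"
proof -
  define e :: "nat \<Rightarrow> 'a" where "e k = riesz_point (riesz_points k)" for k
  have e: "norm (e k) \<le> 1 \<and> (\<forall>s\<in>span (riesz_points k). 1/2 \<le> norm (e k - s))" for k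
  proof -
    have "span (riesz_points k :: 'a set) \<noteq> UNIV"
      using assms finite_riesz_points unfolding infinite_dimensional_def by blast
    from riesz_lemma_finite_span[OF finite_riesz_points this]
    show ?thesis unfolding e_def riesz_point_def by (rule someI_ex)
  qed
  have later: "1/2 \<le> norm (e k - e j)" if "j < k" for j k
  proof -
    have "e j \<in> riesz_points k"
      using riesz_points_mono[of "Suc j" k] that by (auto simp: e_def)
    then show ?thesis using e[of k] span_base by blast
  qed
  then have "1/2 \<le> norm (e j - e k)" if "j \<noteq> k" for j k
    using that later[of j k] later[of k j] by (metis linorder_neqE_nat norm_minus_commute)
  with e that show ?thesis by blast
qed

definition ufilter :: "nat set set \<Rightarrow> nat filter" where
  "ufilter U = Abs_filter (\<lambda>P. {n. P n} \<in> U)"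

lemma eventually_ufilter:
  assumes "is_ultrafilter U"
  shows "eventually P (ufilter U) \<longleftrightarrow> {n. P n} \<in> U"
  unfolding ufilter_def
proof (rule eventually_Abs_filter)
  show "is_filter (\<lambda>P. {n. P n} \<in> U)"
  proof
    show "{n. True} \<in> U" using assms by (simp add: is_ultrafilter_def)
  next
    fix P Q assume "{n. P n} \<in> U" "{n. Q n} \<in> U"
    then show "{n. P n \<and> Q n} \<in> U"
      using assms by (simp add: is_ultrafilter_def Collect_conj_eq)
  next
    fix P Q assume "\<forall>x. P x \<longrightarrow> Q x" "{n. P n} \<in> U"
    then show "{n. Q n} \<in> U"
      using assms unfolding is_ultrafilter_def by (metis mem_Collect_eq subsetI)
  qed
qed

lemma ufilter_neq_bot: "is_ultrafilter U \<Longrightarrow> ufilter U \<noteq> bot"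
  by (simp add: eventually_False[symmetric] eventually_ufilter is_ultrafilter_def)

lemma eventually_ufilter_or_not:
  "is_ultrafilter U \<Longrightarrow> eventually P (ufilter U) \<or> eventually (\<lambda>n. \<not> P n) (ufilter U)"
  by (simp add: eventually_ufilter is_ultrafilter_def Collect_neg_eq)

lemma eventually_notin_finite_ufilter:
  assumes "is_ultrafilter U" "nonprincipal U" "finite S"
  shows "eventually (\<lambda>n. n \<notin> S) (ufilter U)"
proof -
  have "eventually (\<lambda>n. n \<noteq> m) (ufilter U)" for m
    using assms(1,2) eventually_ufilter_or_not[OF assms(1), of "\<lambda>n. n = m"]
    by (simp add: eventually_ufilter nonprincipal_def)
  then have "eventually (\<lambda>n. \<forall>m\<in>S. n \<noteq> m) (ufilter U)"
    by (simp add: eventually_ball_finite assms(3))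
  then show ?thesis by (rule eventually_mono) blast
qed

lemma ueq_iff_tendsto:
  "is_ultrafilter U \<Longrightarrow> ueq U x y \<longleftrightarrow> ((\<lambda>n. x n - y n) \<longlongrightarrow> 0) (ufilter U)"
  by (simp add: ueq_def tendsto_iff eventually_ufilter dist_norm)

lemma weak_ulim_iff_tendsto:
  fixes x :: "nat \<Rightarrow> 'a::real_normed_vector"
  shows "is_ultrafilter U \<Longrightarrow> weak_ulim U x l \<longleftrightarrow>
    (\<forall>f::'a \<Rightarrow>\<^sub>L real. ((\<lambda>n. f (x n)) \<longlongrightarrow> f l) (ufilter U))"
  by (simp add: weak_ulim_def tendsto_iff eventually_ufilter dist_real_def)

lemma ultra_tendsto_in_compact:
  fixes f :: "'a \<Rightarrow> 'b::topological_space"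
  assumes "F \<noteq> bot" and ultra: "\<And>P. eventually P F \<or> eventually (\<lambda>x. \<not> P x) F"
    and "compact K" and "eventually (\<lambda>x. f x \<in> K) F"
  shows "\<exists>l\<in>K. (f \<longlongrightarrow> l) F"
proof -
  have "filtermap f F \<noteq> bot" "eventually (\<lambda>y. y \<in> K) (filtermap f F)"
    using assms by (simp_all add: filtermap_bot_iff eventually_filtermap)
  then obtain l where "l \<in> K" and cluster: "inf (nhds l) (filtermap f F) \<noteq> bot"
    using \<open>compact K\<close> unfolding compact_filter by blast
  have "eventually (\<lambda>x. f x \<in> S) F" if "open S" "l \<in> S" for S
  proof (rule ccontr)
    assume "\<not> eventually (\<lambda>x. f x \<in> S) F"
    then have "eventually (\<lambda>y. y \<notin> S) (filtermap f F)"
      using ultra by (auto simp: eventually_filtermap)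
    moreover have "eventually (\<lambda>y. y \<in> S) (nhds l)"
      using that by (rule eventually_nhds_in_open)
    ultimately have "eventually (\<lambda>_. False) (inf (nhds l) (filtermap f F))"
      unfolding eventually_inf by blast
    then show False using cluster by (simp add: eventually_False)
  qed
  then show ?thesis using \<open>l \<in> K\<close> by (auto simp: tendsto_def)
qed

lemma reflexive_weak_limit_exists:
  fixes y :: "'b \<Rightarrow> 'a::banach"
  assumes "reflexive_space TYPE('a)" and "F \<noteq> bot"
    and ultra: "\<And>P. eventually P F \<or> eventually (\<lambda>x. \<not> P x) F"
    and bounded: "\<And>n. norm (y n) \<le> M"
  shows "\<exists>w. \<forall>f::'a \<Rightarrow>\<^sub>L real. ((\<lambda>n. f (y n)) \<longlongrightarrow> f w) F"
proof -
  define \<phi> where "\<phi> f = Lim F (\<lambda>n. f (y n))" for f :: "'a \<Rightarrow>\<^sub>L real"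
  have bound: "norm (f (y n)) \<le> norm f * M" for f :: "'a \<Rightarrow>\<^sub>L real" and n
    by (meson bounded norm_blinfun norm_ge_zero mult_left_mono order_trans)
  have lim: "((\<lambda>n. f (y n)) \<longlongrightarrow> \<phi> f) F" for f :: "'a \<Rightarrow>\<^sub>L real"
  proof -
    have "eventually (\<lambda>n. f (y n) \<in> cball 0 (norm f * M)) F"
      using bound by simp
    from ultra_tendsto_in_compact[OF \<open>F \<noteq> bot\<close> ultra compact_cball this]
    obtain l where "((\<lambda>n. f (y n)) \<longlongrightarrow> l) F"
      by blast
    then show ?thesis using \<open>F \<noteq> bot\<close> by (simp add: \<phi>_def tendsto_Lim)
  qed
  note lim_unique = tendsto_unique[OF \<open>F \<noteq> bot\<close> lim]
  have "bounded_linear \<phi>"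
  proof (rule bounded_linear_intro)
    show "\<phi> (f + g) = \<phi> f + \<phi> g" for f g :: "'a \<Rightarrow>\<^sub>L real"
      using lim_unique tendsto_add[OF lim lim] by (simp add: plus_blinfun.rep_eq)
    show "\<phi> (r *\<^sub>R f) = r *\<^sub>R \<phi> f" for r and f :: "'a \<Rightarrow>\<^sub>L real"
      using lim_unique tendsto_scaleR[OF tendsto_const lim] by (simp add: scaleR_blinfun.rep_eq)
    show "norm (\<phi> f) \<le> norm f * M" for f
      using Lim_norm_ubound[OF \<open>F \<noteq> bot\<close> lim] bound by simp
  qed
  moreover obtain w where "\<forall>f. Blinfun \<phi> f = f w"
    using assms(1) unfolding reflexive_space_def by blast
  ultimately show ?thesis using lim by (auto simp: bounded_linear_Blinfun_apply)
qed

lemma selective_diagonal: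
  fixes P :: "nat \<Rightarrow> nat \<Rightarrow> bool"
  assumes U: "is_ultrafilter U" and "nonprincipal U" and "selective U"
    and P: "\<And>j. eventually (P j) (ufilter U)"
  obtains k where "eventually (\<lambda>n. P (k n) n) (ufilter U)"
    and "\<And>j. eventually (\<lambda>n. k n \<noteq> j) (ufilter U)"
proof -
  have "{n. P j n} \<in> U" for j using P eventually_ufilter[OF U] by blast
  from conjunct1[OF \<open>selective U\<close>[unfolded selective_def], rule_format, of "\<lambda>j. {n. P j n}", OF this]
  obtain B where "B \<in> U" and fin: "\<And>j. finite (B - {n. P j n})" by blast
  \<comment> \<open>On \<open>B \<inter> {n. P 0 n}\<close> the fibre \<open>k -` {j}\<close> lies in \<open>{..j}\<close> and the finite sets
    \<open>B - {n. P i n}\<close>, \<open>i \<le> Suc j\<close>.\<close>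
  define k where "k n = Max {j. j \<le> n \<and> (\<forall>i\<le>j. P i n)}" for n
  have k_in: "P (k n) n" and k_max: "\<And>j. j \<le> n \<Longrightarrow> \<forall>i\<le>j. P i n \<Longrightarrow> j \<le> k n"
    if "P 0 n" for n
  proof -
    let ?S = "{j. j \<le> n \<and> (\<forall>i\<le>j. P i n)}"
    have "finite ?S" "0 \<in> ?S" using that by auto
    from Max_in[OF this(1)] this(2) show "P (k n) n" unfolding k_def by blast
    show "j \<le> k n" if "j \<le> n" "\<forall>i\<le>j. P i n" for j
      unfolding k_def using \<open>finite ?S\<close> that by (intro Max_ge) auto
  qed
  have good: "eventually (\<lambda>n. n \<in> B \<and> P 0 n) (ufilter U)"
    using \<open>B \<in> U\<close> P[of 0] by (simp add: eventually_ufilter[OF U] eventually_conj_iff)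
  have "eventually (\<lambda>n. k n \<noteq> j) (ufilter U)" for j
  proof -
    let ?E = "{..j} \<union> (\<Union>i\<le>Suc j. B - {n. P i n})"
    have off_fibre: "k n \<noteq> j" if "n \<notin> ?E" "n \<in> B \<and> P 0 n" for n
    proof
      assume "k n = j"
      have "Suc j \<le> n" "\<forall>i\<le>Suc j. P i n" using that by auto
      then show False using k_max[of n "Suc j"] that \<open>k n = j\<close> by simp
    qed
    have "eventually (\<lambda>n. n \<notin> ?E) (ufilter U)"
      by (rule eventually_notin_finite_ufilter[OF U \<open>nonprincipal U\<close>]) (use fin in blast)
    then show ?thesis using good by eventually_elim (use off_fibre in blast)
  qed
  moreover have "eventually (\<lambda>n. P (k n) n) (ufilter U)"
    using good by eventually_elim (use k_in in blast)
  ultimately show ?thesis using that by blast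
qed

lemma eventually_distinct_values:
  assumes "F \<noteq> bot" "eventually P F" "\<And>j. eventually (\<lambda>x. k x \<noteq> j) F"
  obtains x y where "P x" "P y" "k x \<noteq> k y"
proof -
  obtain x where "P x" using assms(1,2) eventually_happens by blast
  moreover obtain y where "P y \<and> k y \<noteq> k x"
    using eventually_happens[OF eventually_conj[OF assms(2) assms(3)]] assms(1) by blast
  ultimately show ?thesis using that by metis
qed

lemma I_plus_0_image_converges:
  fixes T :: "nat \<Rightarrow> ('a::banach \<Rightarrow>\<^sub>L 'a)"
  assumes U: "is_ultrafilter U" and "reflexive_space TYPE('a)"
    and I0: "ultraproduct_is_I_plus_0 U T" and bounded: "\<And>n. norm (y n) \<le> M"
  obtains w where "((\<lambda>n. T n (y n)) \<longlongrightarrow> w) (ufilter U)"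
proof -
  obtain w where w: "\<And>f :: 'a \<Rightarrow>\<^sub>L real. ((\<lambda>n. f (y n)) \<longlongrightarrow> f w) (ufilter U)"
    using reflexive_weak_limit_exists[where y=y and M=M, OF \<open>reflexive_space TYPE('a)\<close>
        ufilter_neq_bot[OF U] eventually_ufilter_or_not[OF U] bounded] by blast
  define z where "z n = y n - w" for n
  have "bounded_seq z"
    unfolding bounded_seq_def z_def
    using bounded by (metis norm_triangle_ineq4 add_right_mono order_trans)
  moreover have "weak_ulim U z 0"
    unfolding weak_ulim_iff_tendsto[OF U]
  proof
    fix f :: "'a \<Rightarrow>\<^sub>L real"
    show "((\<lambda>n. f (z n)) \<longlongrightarrow> f 0) (ufilter U)"
      using tendsto_diff[OF w[of f] tendsto_const[of "f w"]] by (simp add: z_def blinfun.diff_right)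
  qed
  ultimately have "((\<lambda>n. T n (z n)) \<longlongrightarrow> 0) (ufilter U)"
    using I0 by (simp add: ultraproduct_is_I_plus_0_def ueq_iff_tendsto[OF U])
  moreover have "((\<lambda>n. T n w - w) \<longlongrightarrow> 0) (ufilter U)"
    using I0 by (simp add: ultraproduct_is_I_plus_0_def ueq_iff_tendsto[OF U])
  ultimately have "((\<lambda>n. T n (z n) + (T n w - w) + w) \<longlongrightarrow> 0 + 0 + w) (ufilter U)"
    by (intro tendsto_intros)
  then show ?thesis
    using that by (simp add: z_def blinfun.diff_right)
qed

theorem lemma6p4:
  fixes U :: "nat set set" and T :: "nat \<Rightarrow> ('a::banach \<Rightarrow>\<^sub>L 'a)"
  assumes "is_ultrafilter U" and "nonprincipal U" and "selective U"
    and "infinite_dimensional TYPE('a)" and "reflexive_space TYPE('a)"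
    and "\<exists>M. \<forall>n. norm (T n) \<le> M"
  shows "\<not> ultraproduct_is_I_plus_0 U T"
proof
  assume I0: "ultraproduct_is_I_plus_0 U T"
  note U = \<open>is_ultrafilter U\<close>
  obtain e :: "nat \<Rightarrow> 'a" where e_norm: "\<And>k. norm (e k) \<le> 1"
    and e_sep: "\<And>j k. j \<noteq> k \<Longrightarrow> 1/2 \<le> norm (e j - e k)"
    using infinite_dimensional_separated_sequence[OF \<open>infinite_dimensional TYPE('a)\<close>] by blast
  have fixes_e: "((\<lambda>n. T n (e j) - e j) \<longlongrightarrow> 0) (ufilter U)" for j
    using I0 by (simp add: ultraproduct_is_I_plus_0_def ueq_iff_tendsto[OF U])
  have near_fixed_j: "eventually (\<lambda>n. norm (e j - T n (e j)) < 1/8) (ufilter U)" for j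
    using order_tendstoD(2)[OF tendsto_norm_zero[OF fixes_e], of "1/8"]
    by (simp add: norm_minus_commute)
  obtain k where near_fixed: "eventually (\<lambda>n. norm (e (k n) - T n (e (k n))) < 1/8) (ufilter U)"
    and fibres: "\<And>j. eventually (\<lambda>n. k n \<noteq> j) (ufilter U)"
    by (rule selective_diagonal[where P="\<lambda>j n. norm (e j - T n (e j)) < 1/8",
          OF U \<open>nonprincipal U\<close> \<open>selective U\<close> near_fixed_j]) blast
  obtain w where T_e_k: "((\<lambda>n. T n (e (k n))) \<longlongrightarrow> w) (ufilter U)"
    by (rule I_plus_0_image_converges[OF U \<open>reflexive_space TYPE('a)\<close> I0 e_norm])
  have "eventually (\<lambda>n. norm (T n (e (k n)) - w) < 1/8) (ufilter U)"
    using order_tendstoD(2)[OF tendsto_norm_zero[OF LIM_zero[OF T_e_k]], of "1/8"] by simp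
  with near_fixed have "eventually (\<lambda>n. norm (e (k n) - w) < 1/8 + 1/8) (ufilter U)"
    by eventually_elim (rule norm_diff_triangle_less)
  then obtain m n where "norm (e (k m) - w) < 1/4" "norm (w - e (k n)) < 1/4" "k m \<noteq> k n"
    by (rule eventually_distinct_values[OF ufilter_neq_bot[OF U] _ fibres])
      (simp_all add: norm_minus_commute)
  then have "norm (e (k m) - e (k n)) < 1/2"
    using norm_diff_triangle_less by fastforce
  with e_sep[OF \<open>k m \<noteq> k n\<close>] show False by simp
qed

end
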